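(* Let $d\ge 2$ and let $\psi_d:\mathcal{C}_{d-2}\times\mathbb{R}_{\ge0}\to\mathcal{B}_d$, $\psi_d(f,t)(x)=f(x)(x-t)^2$. Then $\psi_d$ is almost injective in the following sense: identifying $F_{d-2}$ with $\mathbb{R}^{d-2}$ via the non-leading coefficients, the set $\mathcal{B}_{d-2}$ has Lebesgue measure zero, and the restriction of $\psi_d$ to $(\mathcal{C}_{d-2}\setminus\mathcal{B}_{d-2})\times\mathbb{R}_{\ge0}$ is injective. (Here $\mathcal{B}_0=\emptyset$.)
   Context: A polynomial $f\in\mathbb{R}[x]$ is copositive if $f(x)\ge0$ for all real $x\ge0$. $F_d$ is the set of monic real polynomials of degree exactly $d$; $\mathcal{C}_d=\{f\in F_d: f\text{ copositive}\}$. The base boundary is $\mathcal{B}_d=\{f\in\mathcal{C}_d:\ \exists\,x\ge 0 \text{ with } f(x)=f'(x)=0\}$. *)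

theory Defs
  imports "HOL-Analysis.Analysis" "HOL-Computational_Algebra.Polynomial"
begin

definition monicF :: "nat \<Rightarrow> real poly set" where
  "monicF d = {f. degree f = d \<and> lead_coeff f = 1}"

definition copositive :: "real poly \<Rightarrow> bool" where
  "copositive f \<longleftrightarrow> (\<forall>x::real. x \<ge> 0 \<longrightarrow> poly f x \<ge> 0)"

definition copC :: "nat \<Rightarrow> real poly set" where
  "copC d = {f \<in> monicF d. copositive f}"

definition baseB :: "nat \<Rightarrow> real poly set" where
  "baseB d = {f \<in> copC d. \<exists>x::real. x \<ge> 0 \<and> poly f x = 0 \<and> poly (pderiv f) x = 0}"

definition psi :: "real poly \<Rightarrow> real \<Rightarrow> real poly" where
  "psi f t = f * [:-t, 1:] ^ 2"

definition monic_of_coeffs :: "nat \<Rightarrow> (nat \<Rightarrow> real) \<Rightarrow> real poly" where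
  "monic_of_coeffs n c = monom 1 n + (\<Sum>i<n. monom (c i) i)"

end

(*
  A polynomial f (x - t)^2 has a double root at t, so psi lands in the base boundary. If f is
  copositive without a double root on the half-line, then t is the only nonnegative double root of
  f (x - t)^2, which recovers t and then f. Finally, changing the constant coefficient shifts the
  graph vertically, and two different shifts cannot both be copositive with a nonnegative root;
  so every line parallel to the constant-coefficient axis meets the base boundary in at most one
  point, and Tonelli's theorem gives measure zero.
*)
theory Submission
  imports Defs
begin

lemma coeff_monic_of_coeffs:
  "coeff (monic_of_coeffs n c) k = (if k = n then 1 else if k < n then c k else 0)"
  by (auto simp: monic_of_coeffs_def coeff_sum coeff_monom)

lemma poly_monic_of_coeffs: "poly (monic_of_coeffs n c) x = x ^ n + (\<Sum>i<n. c i * x ^ i)"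
  by (simp add: monic_of_coeffs_def poly_sum poly_monom)

lemma poly_pderiv_monic_of_coeffs:
  "poly (pderiv (monic_of_coeffs n c)) x = of_nat n * x ^ (n - 1) + (\<Sum>i<n. of_nat i * c i * x ^ (i - 1))"
  by (simp add: monic_of_coeffs_def poly_sum poly_monom pderiv_add pderiv_monom
      higher_pderiv_sum[where n = 1, simplified])

lemma monic_of_coeffs_in_monicF: "monic_of_coeffs n c \<in> monicF n"
proof -
  have "degree (monic_of_coeffs n c) = n"
  proof (rule antisym)
    show "degree (monic_of_coeffs n c) \<le> n"
      by (rule degree_le) (auto simp: coeff_monic_of_coeffs)
    show "n \<le> degree (monic_of_coeffs n c)"
      by (rule le_degree) (simp add: coeff_monic_of_coeffs)
  qed
  then show ?thesis by (simp add: monicF_def coeff_monic_of_coeffs)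
qed

lemma monic_of_coeffs_upd_0:
  assumes "n \<ge> 1"
  shows "monic_of_coeffs n (c(0 := a)) = monic_of_coeffs n (c(0 := b)) + [:a - b:]"
  using assms by (auto simp: poly_eq_iff coeff_monic_of_coeffs coeff_pCons split: nat.split)

lemma baseB_0: "baseB 0 = {}"
  by (auto simp: baseB_def copC_def monicF_def elim!: degree_eq_zeroE)

text \<open>Each of the two polynomials is nonnegative at the other's root.\<close>
lemma baseB_const_shift_eq_0:
  assumes "f \<in> baseB n" "f + [:a:] \<in> baseB n"
  shows "a = 0"
proof -
  obtain x where x: "x \<ge> 0" "poly f x = 0"
    using assms(1) by (auto simp: baseB_def)
  obtain y where y: "y \<ge> 0" "poly f y + a = 0"
    using assms(2) by (auto simp: baseB_def)
  have "0 \<le> poly f y" "0 \<le> poly f x + a"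
    using assms x(1) y(1) by (auto simp: baseB_def copC_def copositive_def)
  then show ?thesis using x(2) y(2) by linarith
qed

lemma poly_pderiv_mult_double_root:
  fixes h :: "real poly"
  shows "poly (h * [:-s, 1:] ^ 2) s = 0 \<and> poly (pderiv (h * [:-s, 1:] ^ 2)) s = 0"
proof -
  have "poly [:-s, 1:] s = 0" by simp
  then show ?thesis
    by (simp only: power2_eq_square pderiv_mult poly_add poly_mult mult_zero_left mult_zero_right add_0)
qed

lemma double_root_imp_baseB:
  assumes "f \<in> copC n" "s \<ge> 0" "[:-s, 1:] ^ 2 dvd f"
  shows "f \<in> baseB n"
proof -
  obtain h where "f = h * [:-s, 1:] ^ 2"
    using assms(3) by (auto simp: mult.commute elim: dvdE)
  then show ?thesis
    using assms(1,2) poly_pderiv_mult_double_root[of h s] by (auto simp: baseB_def)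
qed

lemma psi_in_baseB:
  assumes "f \<in> copC n" "t \<ge> 0"
  shows "psi f t \<in> baseB (n + 2)"
proof -
  have f: "degree f = n" "lead_coeff f = 1" "copositive f"
    using assms(1) by (auto simp: copC_def monicF_def)
  then have "f \<noteq> 0" by auto
  have "lead_coeff (psi f t) = lead_coeff f * lead_coeff ([:-t, 1:] ^ 2)"
    by (simp only: psi_def lead_coeff_mult)
  moreover have "lead_coeff ([:-t, 1:] ^ 2) = 1"
    by (simp only: lead_coeff_power) simp
  ultimately have "psi f t \<in> monicF (n + 2)"
    using f \<open>f \<noteq> 0\<close> by (simp add: monicF_def psi_def degree_mult_eq degree_linear_power)
  moreover have "copositive (psi f t)"
    using f(3) by (auto simp: copositive_def psi_def)
  ultimately show ?thesis
    using assms(2) poly_pderiv_mult_double_root[of f t] by (auto simp: baseB_def copC_def psi_def)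
qed

text \<open>Outside the base boundary \<open>f\<close> has no double root on the half-line, so \<open>t\<close> is recovered
  from \<open>psi f t\<close> as its unique nonnegative root of order at least two.\<close>
lemma psi_eq_imp_eq:
  assumes f: "f \<in> copC n - baseB n" and g: "g \<in> copC n - baseB n"
    and "t \<ge> 0" "s \<ge> 0" and eq: "psi f t = psi g s"
  shows "f = g \<and> t = s"
proof -
  have nz: "f \<noteq> 0" "g \<noteq> 0" using f g by (auto simp: copC_def monicF_def)
  have "t = s"
  proof (rule ccontr)
    assume "t \<noteq> s"
    then have "order s ([:-t, 1:] ^ 2) = 0"
      by (intro order_0I) simp
    then have "order s (psi f t) = order s f"
      using nz by (simp add: psi_def order_mult)
    moreover have "order s (psi g s) = order s g + 2"
      using nz by (simp add: psi_def order_mult order_power_n_n)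
    ultimately have "[:-s, 1:] ^ 2 dvd f"
      using eq order_divides by fastforce
    then show False
      using f \<open>s \<ge> 0\<close> double_root_imp_baseB by blast
  qed
  with eq show ?thesis by (simp add: psi_def)
qed

lemma inj_on_psi: "inj_on (\<lambda>(f, t). psi f t) ((copC n - baseB n) \<times> {0::real..})"
  by (rule inj_onI) (clarsimp, metis DiffI psi_eq_imp_eq)

lemma exists_nonneg_rat_less:
  fixes g :: "real \<Rightarrow> real"
  assumes "isCont g x" "x \<ge> 0" "g x < e"
  shows "\<exists>q::rat. 0 \<le> q \<and> g (real_of_rat q) < e"
proof -
  obtain d where "d > 0" and d: "\<And>y. dist y x < d \<Longrightarrow> dist (g y) (g x) < e - g x"
    using assms(1,3) unfolding continuous_at_eps_delta by (meson diff_gt_0_iff_gt)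
  obtain q :: rat where q: "x < real_of_rat q" "real_of_rat q < x + d"
    using Rats_dense_in_real[of x "x + d"] \<open>d > 0\<close> by (auto elim!: Rats_cases)
  then have "g (real_of_rat q) < e"
    using d[of "real_of_rat q"] by (auto simp: dist_real_def abs_less_iff)
  moreover have "0 \<le> real_of_rat q"
    using assms(2) q(1) by linarith
  ultimately show ?thesis
    by auto
qed

lemma copositive_iff_nonneg_rats:
  "copositive f \<longleftrightarrow> (\<forall>q::rat. 0 \<le> q \<longrightarrow> 0 \<le> poly f (real_of_rat q))"
proof
  assume "\<forall>q::rat. 0 \<le> q \<longrightarrow> 0 \<le> poly f (real_of_rat q)"
  then show "copositive f"
    unfolding copositive_def
    using exists_nonneg_rat_less[where g = "poly f" and e = 0] by (meson not_le poly_isCont)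
qed (simp add: copositive_def)

text \<open>Countable quantifiers replace the existential over the half-line, so that the base boundary
  becomes measurable. For the converse, \<open>g\<close> attains its minimum on the compact interval to which
  the small rational values are confined.\<close>
lemma exists_nonneg_zero_iff_rats:
  fixes g :: "real \<Rightarrow> real"
  assumes cont: "\<And>x. isCont g x" and nonneg: "\<And>x. 0 \<le> g x" and far: "\<And>x. x \<ge> R \<Longrightarrow> 1 \<le> g x"
  shows "(\<exists>x\<ge>0. g x = 0)
    \<longleftrightarrow> (\<forall>k::nat. \<exists>q::rat. 0 \<le> q \<and> g (real_of_rat q) < 1 / real (Suc k))"
proof
  assume "\<exists>x\<ge>0. g x = 0"
  then show "\<forall>k::nat. \<exists>q::rat. 0 \<le> q \<and> g (real_of_rat q) < 1 / real (Suc k)"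
    using exists_nonneg_rat_less[OF cont] by auto
next
  assume small: "\<forall>k::nat. \<exists>q::rat. 0 \<le> q \<and> g (real_of_rat q) < 1 / real (Suc k)"
  have "continuous_on {0..max R 0} g"
    by (simp add: cont continuous_at_imp_continuous_on)
  then obtain x where x: "x \<in> {0..max R 0}" and min: "\<And>y. y \<in> {0..max R 0} \<Longrightarrow> g x \<le> g y"
    using continuous_attains_inf[of "{0..max R 0}" g] by auto
  have "g x \<le> 0"
  proof (rule ccontr)
    assume "\<not> g x \<le> 0"
    then obtain k where k: "1 / real (Suc k) < g x" "1 / real (Suc k) < 1"
      using nat_approx_posE[of "min (g x) 1"] by auto
    obtain q :: rat where q: "0 \<le> q" "g (real_of_rat q) < 1 / real (Suc k)"
      using small by blast
    moreover have "\<not> R \<le> real_of_rat q"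
      using far[of "real_of_rat q"] q(2) k(2) by linarith
    ultimately have "real_of_rat q \<in> {0..max R 0}"
      by auto
    then show False
      using min q(2) k(1) by fastforce
  qed
  then show "\<exists>x\<ge>0. g x = 0"
    using x nonneg[of x] by auto
qed

definition root_defect :: "real poly \<Rightarrow> real \<Rightarrow> real" where
  "root_defect f x = (poly f x)\<^sup>2 + (poly (pderiv f) x)\<^sup>2"

lemma baseB_iff_rats:
  assumes "f \<in> copC n"
  shows "f \<in> baseB n
    \<longleftrightarrow> (\<forall>k::nat. \<exists>q::rat. 0 \<le> q \<and> root_defect f (real_of_rat q) < 1 / real (Suc k))"
    (is "_ \<longleftrightarrow> ?small")
proof -
  have "lead_coeff f = 1"
    using assms by (auto simp: copC_def monicF_def)
  then obtain R where R: "\<And>x. x \<ge> R \<Longrightarrow> 1 \<le> poly f x"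
    using poly_pinfty_gt_lc[of f] by auto
  have far: "1 \<le> root_defect f x" if "x \<ge> R" for x
  proof -
    have "1 \<le> (poly f x)\<^sup>2" using R[OF that] by (simp add: one_le_power)
    then show ?thesis unfolding root_defect_def by (simp add: add_increasing2)
  qed
  have "f \<in> baseB n \<longleftrightarrow> (\<exists>x\<ge>0. root_defect f x = 0)"
    using assms by (auto simp: baseB_def root_defect_def add_nonneg_eq_0_iff)
  also have "\<dots> \<longleftrightarrow> ?small"
    by (rule exists_nonneg_zero_iff_rats[where R = R]) (auto simp: root_defect_def far[unfolded root_defect_def])
  finally show ?thesis .
qed

lemma measurable_poly_monic_of_coeffs [measurable]:
  "(\<lambda>c. poly (monic_of_coeffs n c) x) \<in> borel_measurable (Pi\<^sub>M {..<n} (\<lambda>_. lborel))"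
  unfolding poly_monic_of_coeffs by measurable

lemma measurable_root_defect_monic_of_coeffs [measurable]:
  "(\<lambda>c. root_defect (monic_of_coeffs n c) x) \<in> borel_measurable (Pi\<^sub>M {..<n} (\<lambda>_. lborel))"
  unfolding root_defect_def poly_monic_of_coeffs poly_pderiv_monic_of_coeffs by measurable

definition baseB_coeffs :: "nat \<Rightarrow> (nat \<Rightarrow> real) set" where
  "baseB_coeffs n = {c \<in> PiE {..<n} (\<lambda>_. UNIV). monic_of_coeffs n c \<in> baseB n}"

lemma baseB_coeffs_sets: "baseB_coeffs n \<in> sets (Pi\<^sub>M {..<n} (\<lambda>_. lborel))"
proof -
  have "baseB_coeffs n = {c \<in> space (Pi\<^sub>M {..<n} (\<lambda>_. lborel)).
      (\<forall>q::rat. 0 \<le> q \<longrightarrow> 0 \<le> poly (monic_of_coeffs n c) (real_of_rat q)) \<and>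
      (\<forall>k::nat. \<exists>q::rat. 0 \<le> q \<and>
          root_defect (monic_of_coeffs n c) (real_of_rat q) < 1 / real (Suc k))}"
  proof -
    have "f \<in> baseB n \<longleftrightarrow> copositive f \<and>
        (\<forall>k::nat. \<exists>q::rat. 0 \<le> q \<and> root_defect f (real_of_rat q) < 1 / real (Suc k))"
      if "f \<in> monicF n" for f
      using that baseB_iff_rats[of f n] by (auto simp: copC_def baseB_def)
    then show ?thesis
      using monic_of_coeffs_in_monicF
      by (auto simp: baseB_coeffs_def space_PiM copositive_iff_nonneg_rats)
  qed
  also have "\<dots> \<in> sets (Pi\<^sub>M {..<n} (\<lambda>_. lborel))"
    by measurable
  finally show ?thesis .
qed

lemma finite_baseB_coeffs_fibre:
  assumes "n \<ge> 1"
  shows "finite {a. c(0 := a) \<in> baseB_coeffs n}"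
proof -
  have unique: "a = b" if "c(0 := a) \<in> baseB_coeffs n" "c(0 := b) \<in> baseB_coeffs n" for a b
  proof -
    have "monic_of_coeffs n (c(0 := b)) + [:a - b:] \<in> baseB n"
      using that(1) monic_of_coeffs_upd_0[OF assms, of c a b] by (simp add: baseB_coeffs_def)
    moreover have "monic_of_coeffs n (c(0 := b)) \<in> baseB n"
      using that(2) by (simp add: baseB_coeffs_def)
    ultimately have "a - b = 0"
      by (rule baseB_const_shift_eq_0[rotated])
    then show ?thesis by simp
  qed
  show ?thesis
  proof (cases "{a. c(0 := a) \<in> baseB_coeffs n} = {}")
    case False
    then obtain a where "c(0 := a) \<in> baseB_coeffs n" by auto
    then have "{a. c(0 := a) \<in> baseB_coeffs n} \<subseteq> {a}"
      using unique by blast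
    then show ?thesis by (rule finite_subset) simp
  qed simp
qed

text \<open>Tonelli, integrating out the constant coefficient first: each fibre is finite.\<close>
lemma baseB_coeffs_null: "baseB_coeffs n \<in> null_sets (Pi\<^sub>M {..<n} (\<lambda>_. lborel))"
proof (cases "n = 0")
  case True
  then show ?thesis by (simp add: baseB_coeffs_def baseB_0)
next
  case False
  then have "n \<ge> 1" and ins: "{..<n} = insert 0 {1..<n}" by auto
  interpret product_sigma_finite "\<lambda>_. lborel" by standard
  have fibre: "(\<integral>\<^sup>+ a. indicator (baseB_coeffs n) (c(0 := a)) \<partial>lborel) = 0" for c
  proof -
    have null: "{a. c(0 := a) \<in> baseB_coeffs n} \<in> null_sets lborel"
      using finite_baseB_coeffs_fibre[OF \<open>n \<ge> 1\<close>] by (rule finite_imp_null_set_lborel)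
    have "(\<integral>\<^sup>+ a. indicator (baseB_coeffs n) (c(0 := a)) \<partial>lborel)
        = (\<integral>\<^sup>+ a. indicator {a. c(0 := a) \<in> baseB_coeffs n} a \<partial>lborel)"
      by (rule nn_integral_cong) (simp split: split_indicator)
    also have "\<dots> = emeasure lborel {a. c(0 := a) \<in> baseB_coeffs n}"
      using null by (intro nn_integral_indicator null_setsD2)
    also have "\<dots> = 0"
      using null by (rule null_setsD1)
    finally show ?thesis .
  qed
  have "emeasure (Pi\<^sub>M {..<n} (\<lambda>_. lborel)) (baseB_coeffs n)
      = (\<integral>\<^sup>+ c. indicator (baseB_coeffs n) c \<partial>Pi\<^sub>M {..<n} (\<lambda>_. lborel))"
    using baseB_coeffs_sets by simp
  also have "\<dots> = (\<integral>\<^sup>+ c. (\<integral>\<^sup>+ a. indicator (baseB_coeffs n) (c(0 := a)) \<partial>lborel)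
      \<partial>Pi\<^sub>M {1..<n} (\<lambda>_. lborel))"
    unfolding ins by (rule product_nn_integral_insert) (use baseB_coeffs_sets[of n, unfolded ins] in auto)
  also have "\<dots> = 0"
    by (simp add: fibre)
  finally show ?thesis
    using baseB_coeffs_sets by (simp add: null_sets_def)
qed

theorem mainTheorem3:
  fixes d :: nat
  assumes "d \<ge> 2"
  shows "(\<forall>f \<in> copC (d - 2). \<forall>t::real. t \<ge> 0 \<longrightarrow> psi f t \<in> baseB d)
    \<and> {c \<in> PiE {..<d - 2} (\<lambda>_. UNIV). monic_of_coeffs (d - 2) c \<in> baseB (d - 2)}
        \<in> null_sets (Pi\<^sub>M {..<d - 2} (\<lambda>_. lborel))
    \<and> inj_on (\<lambda>(f, t). psi f t) ((copC (d - 2) - baseB (d - 2)) \<times> {0::real..})"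
proof (intro conjI)
  have "d - 2 + 2 = d" using assms by simp
  then show "\<forall>f \<in> copC (d - 2). \<forall>t::real. t \<ge> 0 \<longrightarrow> psi f t \<in> baseB d"
    using psi_in_baseB[of _ "d - 2"] by metis
  show "{c \<in> PiE {..<d - 2} (\<lambda>_. UNIV). monic_of_coeffs (d - 2) c \<in> baseB (d - 2)}
      \<in> null_sets (Pi\<^sub>M {..<d - 2} (\<lambda>_. lborel))"
    using baseB_coeffs_null by (simp add: baseB_coeffs_def)
qed (rule inj_on_psi)

end
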